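(* For all distributions $\mu_1,\mu_2,\nu_2$ on $\mathbb{C}[x]$ one has $$\mu_1 \rhd_{\nu_2}\mu_2 = \mu_1 \,{}_{\delta_1}\!\boxtimes_{\nu_2}\mu_2 ,$$ where the left side is the left component of the multiplicative conditionally monotone convolution and the right side is the left component of the multiplicative conditionally free convolution $(\mu_1,\delta_1)\boxtimes_c(\mu_2,\nu_2)$.
   Context: A distribution is a unital linear functional on $\mathbb{C}[x]$. An algebraic probability space $(\mathcal{A},\varphi,\psi)$ is a unital complex algebra with two unital linear functionals. For $X\in\mathcal{A}$ let $\mu_X(x^n)=\varphi(X^n)$ and $\nu_X(x^n)=\psi(X^n)$. The distribution $\delta_1$ is given by $\delta_1(x^n)=1$ for all $n\ge 0$. Conditionally monotone (c-monotone) independence. Let $I$ be a linearly ordered set and let $\{\mathcal{A}_i\}_{i\in I}$ be subalgebras of $\mathcal{A}$, none containing the unit. They are c-monotone independent if for all $n\ge1$, indices $i_1,\dots,i_n$ and $X_k\in\mathcal{A}_{i_k}$: (1) $\varphi(X_1\cdots X_n)=\varphi(X_1)\varphi(X_2\cdots X_n)$ whenever $i_1>i_2$; (2) $\varphi(X_1\cdots X_n)=\varphi(X_1\cdots X_{n-1})\varphi(X_n)$ whenever $i_n>i_{n-1}$; (3) $\varphi(X_1\cdots X_n)=(\varphi(X_j)-\psi(X_j))\varphi(X_1\cdots X_{j-1})\varphi(X_{j+1}\cdots X_n)+\psi(X_j)\varphi(X_1\cdots X_{j-1}X_{j+1}\cdots X_n)$ whenever $2\le j\le n-1$ and $i_{j-1}<i_j>i_{j+1}$;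 (4) conditions (1)–(3) also hold with $\varphi$ replaced by $\psi$ everywhere (monotone independence with respect to $\psi$). Elements are c-monotone independent if the non-unital subalgebras they generate are. Multiplicative c-monotone convolution: if $X,Y\in\mathcal{A}$ are such that $X-1$ and $Y$ are c-monotone independent (the algebra of $X-1$ preceding that of $Y$), the pair $(\mu_{XY},\nu_{XY})$ is denoted $(\mu_X,\nu_X)\rhd_c(\mu_Y,\nu_Y)$. Its left component depends only on $\mu_X,\mu_Y,\nu_Y$ and is denoted $\mu_X\rhd_{\nu_Y}\mu_Y$. Its right component is the multiplicative monotone convolution $\nu_X\rhd\nu_Y$. The convolution is defined for arbitrary distributions by realizing them in such a space. Conditionally free (c-free) independence: subalgebras $\{\mathcal{A}_i\}$ of $(\mathcal{A},\varphi,\psi)$ are c-free if they are freely independent with respect to $\psi$ and $\varphi(X_1\cdots X_n)=\prod_k\varphi(X_k)$ whenever $X_k\in\mathcal{A}_{i_k}$, $i_1\ne i_2\ne\cdots\ne i_n$ and $\psi(X_k)=0$ for all $k$. If $X,Y$ are c-free, $(\mu_{XY},\nu_{XY})$ depends only on $(\mu_X,\nu_X)$ and $(\mu_Y,\nu_Y)$. It is denoted $(\mu_X,\nu_X)\boxtimes_c(\mu_Y,\nu_Y)=(\mu_X\,{}_{\nu_X}\!\boxtimes_{\nu_Y}\mu_Y,\ \nu_X\boxtimes\nu_Y)$. *)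

theory Defs
  imports Complex_Main "HOL-Computational_Algebra.Polynomial"
begin

definition distribution :: "(complex poly \<Rightarrow> complex) \<Rightarrow> bool" where
  "distribution \<mu> \<longleftrightarrow>
     (\<forall>p q. \<mu> (p + q) = \<mu> p + \<mu> q) \<and> (\<forall>a p. \<mu> (smult a p) = a * \<mu> p) \<and> \<mu> 1 = 1"

definition delta1 :: "complex poly \<Rightarrow> complex" where
  "delta1 p = poly p 1"

text \<open>A unital complex algebra is a ring_1 type 'a together with a central unital ring
  embedding e of the scalars (scalar multiplication a.x = e a * x).\<close>
definition complex_alg :: "(complex \<Rightarrow> 'a::ring_1) \<Rightarrow> bool" where
  "complex_alg e \<longleftrightarrow> e 1 = 1 \<and> (\<forall>a b. e (a + b) = e a + e b) \<and> (\<forall>a b. e (a * b) = e a * e b)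
     \<and> (\<forall>a x. e a * x = x * e a)"

definition unital_functional :: "(complex \<Rightarrow> 'a::ring_1) \<Rightarrow> ('a \<Rightarrow> complex) \<Rightarrow> bool" where
  "unital_functional e \<phi> \<longleftrightarrow>
     (\<forall>x y. \<phi> (x + y) = \<phi> x + \<phi> y) \<and> (\<forall>a x. \<phi> (e a * x) = a * \<phi> x) \<and> \<phi> 1 = 1"

definition alg_prob_space :: "(complex \<Rightarrow> 'a::ring_1) \<Rightarrow> ('a \<Rightarrow> complex) \<Rightarrow> ('a \<Rightarrow> complex) \<Rightarrow> bool" where
  "alg_prob_space e \<phi> \<psi> \<longleftrightarrow> complex_alg e \<and> unital_functional e \<phi> \<and> unital_functional e \<psi>"

definition peval :: "(complex \<Rightarrow> 'a::ring_1) \<Rightarrow> complex poly \<Rightarrow> 'a \<Rightarrow> 'a" where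
  "peval e p Z = (\<Sum>i\<le>degree p. e (coeff p i) * Z ^ i)"

definition law :: "(complex \<Rightarrow> 'a::ring_1) \<Rightarrow> ('a \<Rightarrow> complex) \<Rightarrow> 'a \<Rightarrow> complex poly \<Rightarrow> complex" where
  "law e \<phi> Z = (\<lambda>p. \<phi> (peval e p Z))"

definition ngen :: "(complex \<Rightarrow> 'a::ring_1) \<Rightarrow> 'a \<Rightarrow> 'a set" where
  "ngen e Z = {peval e p Z | p. coeff p 0 = 0}"

definition ugen :: "(complex \<Rightarrow> 'a::ring_1) \<Rightarrow> 'a \<Rightarrow> 'a set" where
  "ugen e Z = {peval e p Z | p. True}"

definition subalgebra :: "(complex \<Rightarrow> 'a::ring_1) \<Rightarrow> 'a set \<Rightarrow> bool" where
  "subalgebra e A \<longleftrightarrow> 0 \<in> A \<and> (\<forall>x\<in>A. \<forall>y\<in>A. x + y \<in> A \<and> x * y \<in> A)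
     \<and> (\<forall>a. \<forall>x\<in>A. e a * x \<in> A)"

definition valid_word :: "'i set \<Rightarrow> ('i \<Rightarrow> 'a set) \<Rightarrow> ('i \<times> 'a) list \<Rightarrow> bool" where
  "valid_word I A ws \<longleftrightarrow> (\<forall>w\<in>set ws. fst w \<in> I \<and> snd w \<in> A (fst w))"

definition wprod :: "('i \<times> 'a::monoid_mult) list \<Rightarrow> 'a" where
  "wprod ws = prod_list (map snd ws)"

text \<open>Conditions (1)-(3) for the functional f, with g the functional appearing in (3)
  (indices 0-based: the paper's j with 2 <= j <= n-1 is j+1 here with 1 <= j <= n-2).\<close>
definition mono_conditions ::
  "'i::linorder set \<Rightarrow> ('i \<Rightarrow> 'a::ring_1 set) \<Rightarrow> ('a \<Rightarrow> complex) \<Rightarrow> ('a \<Rightarrow> complex) \<Rightarrow> bool" where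
  "mono_conditions I A f g \<longleftrightarrow>
    (\<forall>ws. valid_word I A ws \<and> ws \<noteq> [] \<longrightarrow>
      (let n = length ws in
       (2 \<le> n \<and> fst (ws ! 0) > fst (ws ! 1) \<longrightarrow>
          f (wprod ws) = f (snd (ws ! 0)) * f (wprod (tl ws))) \<and>
       (2 \<le> n \<and> fst (ws ! (n - 1)) > fst (ws ! (n - 2)) \<longrightarrow>
          f (wprod ws) = f (wprod (butlast ws)) * f (snd (ws ! (n - 1)))) \<and>
       (\<forall>j. 1 \<le> j \<and> j + 1 < n \<and> fst (ws ! (j - 1)) < fst (ws ! j) \<and> fst (ws ! j) > fst (ws ! (j + 1)) \<longrightarrow>
          f (wprod ws) =
            (f (snd (ws ! j)) - g (snd (ws ! j))) * f (wprod (take j ws)) * f (wprod (drop (j + 1) ws))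
            + g (snd (ws ! j)) * f (wprod (take j ws @ drop (j + 1) ws)))))"

definition cmono_indep ::
  "(complex \<Rightarrow> 'a::ring_1) \<Rightarrow> ('a \<Rightarrow> complex) \<Rightarrow> ('a \<Rightarrow> complex) \<Rightarrow> 'i::linorder set \<Rightarrow> ('i \<Rightarrow> 'a set) \<Rightarrow> bool" where
  "cmono_indep e \<phi> \<psi> I A \<longleftrightarrow>
     (\<forall>i\<in>I. subalgebra e (A i) \<and> 1 \<notin> A i) \<and>
     mono_conditions I A \<phi> \<psi> \<and> mono_conditions I A \<psi> \<psi>"

definition cfree_indep ::
  "(complex \<Rightarrow> 'a::ring_1) \<Rightarrow> ('a \<Rightarrow> complex) \<Rightarrow> ('a \<Rightarrow> complex) \<Rightarrow> 'i set \<Rightarrow> ('i \<Rightarrow> 'a set) \<Rightarrow> bool" where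
  "cfree_indep e \<phi> \<psi> I A \<longleftrightarrow>
     (\<forall>i\<in>I. subalgebra e (A i)) \<and>
     (\<forall>ws. valid_word I A ws \<and> ws \<noteq> [] \<and>
           (\<forall>k. k + 1 < length ws \<longrightarrow> fst (ws ! k) \<noteq> fst (ws ! (k + 1))) \<and>
           (\<forall>w\<in>set ws. \<psi> (snd w) = 0) \<longrightarrow>
        \<psi> (wprod ws) = 0 \<and> \<phi> (wprod ws) = (\<Prod>w\<leftarrow>ws. \<phi> (snd w)))"

end

theory Submission
  imports Defs
begin

text \<open>
  Write A = X - 1 and, for a word R in A and Y, split it as A^p Y^q R' with R' empty or starting
  with A. In both settings the first functional obeys
    phi(A^p Y^q R') = (phi(Y^q) - psi(Y^q)) phi(A^p) phi(R') + psi(Y^q) phi(A^p R').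
  In the c-monotone setting this is condition (3) (conditions (1) and (2) when p = 0 or R' is
  empty). In the c-free setting psi(A^p) = 0 because the psi-law of X is delta_1, so writing
  Y^q = (Y^q - psi(Y^q)) + psi(Y^q) produces alternating psi-centered words, on which phi factorizes.
  By induction on the length, this recursion together with the moments of A and Y determines phi on
  all words, and (XY)^n = (AY + Y)^n is a sum of words.
\<close>

lemma complex_alg_one: "complex_alg e \<Longrightarrow> e 1 = 1"
  and complex_alg_add: "complex_alg e \<Longrightarrow> e (a + b) = e a + e b"
  and complex_alg_mult: "complex_alg e \<Longrightarrow> e (a * b) = e a * e b"
  and complex_alg_commute: "complex_alg e \<Longrightarrow> e a * x = x * e a"
  unfolding complex_alg_def by blast+

lemma complex_alg_zero: "complex_alg e \<Longrightarrow> e 0 = 0"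
  using complex_alg_add[of e 0 0] by simp

lemma complex_alg_minus: "complex_alg e \<Longrightarrow> e (- a) = - e a"
  using complex_alg_add[of e a "- a"] complex_alg_zero[of e] by (simp add: add_eq_0_iff2)

lemma complex_alg_mult_left_commute:
  assumes "complex_alg e" shows "x * (e c * y) = e c * (x * y)"
proof -
  have "x * (e c * y) = (x * e c) * y" by (rule mult.assoc[symmetric])
  also have "\<dots> = (e c * x) * y" by (simp only: complex_alg_commute[OF assms])
  finally show ?thesis by (simp only: mult.assoc)
qed

lemma unital_functional_zero: "unital_functional e f \<Longrightarrow> f 0 = 0"
  unfolding unital_functional_def by (metis add_cancel_left_right)

lemma unital_functional_diff: "unital_functional e f \<Longrightarrow> f (x - y) = f x - f y"
  unfolding unital_functional_def by (metis eq_diff_eq)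

lemma unital_functional_scalar: "unital_functional e f \<Longrightarrow> f (e c) = c"
  unfolding unital_functional_def by (metis mult.right_neutral)

lemma unital_functional_sum:
  "unital_functional e f \<Longrightarrow> f (\<Sum>i\<in>S. e (c i) * Z i) = (\<Sum>i\<in>S. c i * f (Z i))"
  by (induction S rule: infinite_finite_induct)
    (simp_all add: unital_functional_zero, simp add: unital_functional_def)

lemma peval_eq_sum_lessThan:
  assumes "complex_alg e" "degree p < N"
  shows "peval e p Z = (\<Sum>i<N. e (coeff p i) * Z ^ i)"
proof -
  have "(\<Sum>i<N. e (coeff p i) * Z ^ i) = (\<Sum>i\<le>degree p. e (coeff p i) * Z ^ i)"
    by (rule sum.mono_neutral_right) (use assms in \<open>auto simp: coeff_eq_0 complex_alg_zero\<close>)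
  then show ?thesis by (simp add: peval_def)
qed

lemma peval_add:
  assumes "complex_alg e" shows "peval e (p + q) Z = peval e p Z + peval e q Z"
proof -
  define N where "N = Suc (max (degree p) (degree q))"
  have deg: "degree p < N" "degree q < N" "degree (p + q) < N"
    using degree_add_le_max[of p q] by (auto simp: N_def)
  have "peval e (p + q) Z = (\<Sum>i<N. e (coeff p i) * Z ^ i + e (coeff q i) * Z ^ i)"
    using peval_eq_sum_lessThan[OF assms deg(3)] by (simp add: complex_alg_add[OF assms] distrib_right)
  then show ?thesis
    by (simp add: sum.distrib peval_eq_sum_lessThan[OF assms deg(1)] peval_eq_sum_lessThan[OF assms deg(2)])
qed

lemma peval_smult:
  assumes "complex_alg e" shows "peval e (smult c p) Z = e c * peval e p Z"
proof -
  define N where "N = Suc (degree p)"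
  have deg: "degree p < N" "degree (smult c p) < N"
    using degree_smult_le[of c p] by (auto simp: N_def)
  have "peval e (smult c p) Z = (\<Sum>i<N. e c * (e (coeff p i) * Z ^ i))"
    using peval_eq_sum_lessThan[OF assms deg(2)] by (simp add: complex_alg_mult[OF assms] mult.assoc)
  then show ?thesis
    by (simp add: sum_distrib_left peval_eq_sum_lessThan[OF assms deg(1)])
qed

lemma peval_pCons_0:
  assumes "complex_alg e" shows "peval e (pCons 0 p) Z = Z * peval e p Z"
proof -
  define N where "N = Suc (degree p)"
  have deg: "degree p < N" "degree (pCons 0 p) < Suc N"
    by (auto simp: N_def degree_pCons_le le_imp_less_Suc)
  have "peval e (pCons 0 p) Z = (\<Sum>i<Suc N. e (coeff (pCons 0 p) i) * Z ^ i)"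
    by (rule peval_eq_sum_lessThan[OF assms deg(2)])
  also have "\<dots> = (\<Sum>i<N. e (coeff p i) * Z ^ Suc i)"
    unfolding sum.lessThan_Suc_shift by (simp add: complex_alg_zero[OF assms])
  also have "\<dots> = (\<Sum>i<N. Z * (e (coeff p i) * Z ^ i))"
    by (intro sum.cong refl) (simp add: complex_alg_mult_left_commute[OF assms] mult.assoc)
  also have "\<dots> = Z * peval e p Z"
    by (simp add: sum_distrib_left peval_eq_sum_lessThan[OF assms deg(1)])
  finally show ?thesis .
qed

lemma peval_monom_1:
  assumes "complex_alg e" shows "peval e (monom 1 n) Z = Z ^ n"
proof -
  have "peval e (monom 1 n) Z = (\<Sum>i\<le>n. if i = n then Z ^ n else 0)"
    unfolding peval_def using assms
    by (intro sum.cong) (auto simp: degree_monom_eq complex_alg_zero complex_alg_one)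
  then show ?thesis by simp
qed

lemma peval_shifted_power:
  assumes "complex_alg e" shows "peval e ([:-1, 1:] ^ n) Z = (Z - 1) ^ n"
proof (induction n)
  case 0
  then show ?case using peval_monom_1[OF assms, of 0 Z] by simp
next
  case (Suc n)
  have eq: "[:-1, 1:] ^ Suc n = smult (-1) ([:-1, 1:] ^ n) + pCons 0 ([:-1, 1:] ^ n)"
    by simp
  have "peval e ([:-1, 1:] ^ Suc n) Z = e (-1) * (Z - 1) ^ n + Z * (Z - 1) ^ n"
    by (simp only: eq peval_add[OF assms] peval_smult[OF assms] peval_pCons_0[OF assms] Suc)
  also have "\<dots> = (Z - 1) ^ Suc n"
    using complex_alg_minus[OF assms, of 1] complex_alg_one[OF assms] by (simp add: left_diff_distrib)
  finally show ?case .
qed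

lemma law_monom_1: "complex_alg e \<Longrightarrow> law e \<phi> Z (monom 1 n) = \<phi> (Z ^ n)"
  by (simp add: law_def peval_monom_1)

lemma law_shifted_power: "complex_alg e \<Longrightarrow> law e \<phi> Z ([:-1, 1:] ^ n) = \<phi> ((Z - 1) ^ n)"
  by (simp add: law_def peval_shifted_power)

lemma law_eq_sum_moments:
  "unital_functional e \<phi> \<Longrightarrow> law e \<phi> Z r = (\<Sum>i\<le>degree r. coeff r i * \<phi> (Z ^ i))"
  unfolding law_def peval_def by (rule unital_functional_sum)

lemma law_eqI:
  assumes "unital_functional e \<phi>" "unital_functional e' \<phi>'" "\<And>n. \<phi> (Z ^ n) = \<phi>' (Z' ^ n)"
  shows "law e \<phi> Z = law e' \<phi>' Z'"
  using assms by (simp add: law_eq_sum_moments fun_eq_iff)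

lemma ngen_power: "complex_alg e \<Longrightarrow> n \<ge> 1 \<Longrightarrow> Z ^ n \<in> ngen e Z"
  unfolding ngen_def by (rule CollectI, rule exI[of _ "monom 1 n"]) (simp add: peval_monom_1)

lemma ugen_power: "complex_alg e \<Longrightarrow> Z ^ n \<in> ugen e Z"
  unfolding ugen_def by (rule CollectI, rule exI[of _ "monom 1 n"]) (simp add: peval_monom_1)

lemma ugen_shifted_power: "complex_alg e \<Longrightarrow> (Z - 1) ^ n \<in> ugen e Z"
  unfolding ugen_def by (rule CollectI, rule exI[of _ "[:-1, 1:] ^ n"]) (simp add: peval_shifted_power)

section \<open>Words in two letters and the moment recursion\<close>

definition word_prod :: "'a::monoid_mult \<Rightarrow> 'a \<Rightarrow> bool list \<Rightarrow> 'a" where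
  "word_prod a b w = prod_list (map (\<lambda>t. if t then a else b) w)"

lemma word_prod_Nil [simp]: "word_prod a b [] = 1"
  and word_prod_append: "word_prod a b (v @ w) = word_prod a b v * word_prod a b w"
  and word_prod_replicate_True [simp]: "word_prod a b (replicate n True) = a ^ n"
  and word_prod_replicate_False [simp]: "word_prod a b (replicate n False) = b ^ n"
  by (simp_all add: word_prod_def)

lemma bool_list_blocks:
  obtains p q R where "w = replicate p True @ replicate q False @ R" "R = [] \<or> hd R" "q = 0 \<longrightarrow> R = []"
proof (induction w arbitrary: thesis)
  case Nil
  then show ?case by (metis append.left_neutral replicate_0)
next
  case (Cons t w)
  then obtain p q R where w: "w = replicate p True @ replicate q False @ R"
    and R: "R = [] \<or> hd R" "q = 0 \<longrightarrow> R = []"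
    by blast
  show ?case
  proof (cases "t \<or> p = 0")
    case True
    then show ?thesis
      using Cons.prems[of "if t then Suc p else 0" "if t then q else Suc q" R] w R by auto
  next
    case False
    then show ?thesis
      using Cons.prems[of 0 1 w] w by (cases p) auto
  qed
qed

text \<open>
  True stands for A = X - 1 and False for Y; a p, m q and s q play the roles of phi(A^p),
  phi(Y^q) and psi(Y^q). The second clause is the shape of condition (3) of c-monotone
  independence at the first block of Y's.
\<close>
definition moment_recursion ::
  "(bool list \<Rightarrow> complex) \<Rightarrow> (nat \<Rightarrow> complex) \<Rightarrow> (nat \<Rightarrow> complex) \<Rightarrow> (nat \<Rightarrow> complex) \<Rightarrow> bool" where
  "moment_recursion F a m s \<longleftrightarrow>
     (\<forall>p. F (replicate p True) = a p) \<and>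
     (\<forall>p q R. q \<ge> 1 \<longrightarrow> (R = [] \<or> hd R) \<longrightarrow>
        F (replicate p True @ replicate q False @ R) = (m q - s q) * a p * F R + s q * F (replicate p True @ R))"

lemma moment_recursion_unique:
  assumes F: "moment_recursion F a m s" and G: "moment_recursion G a m s"
  shows "F = G"
proof
  fix w
  show "F w = G w"
  proof (induction "length w" arbitrary: w rule: less_induct)
    case less
    obtain p q R where w: "w = replicate p True @ replicate q False @ R"
      and R: "R = [] \<or> hd R" and q0: "q = 0 \<longrightarrow> R = []"
      using bool_list_blocks[of w] .
    show ?case
    proof (cases "q = 0")
      case True
      then show ?thesis using w q0 F G by (simp add: moment_recursion_def)
    next
      case False
      then have "F R = G R" "F (replicate p True @ R) = G (replicate p True @ R)"
        using w by (auto intro: less)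
      moreover have "q \<ge> 1" using False by simp
      then have "F w = (m q - s q) * a p * F R + s q * F (replicate p True @ R)"
        and "G w = (m q - s q) * a p * G R + s q * G (replicate p True @ R)"
        using F G R unfolding moment_recursion_def w by blast+
      ultimately show ?thesis by simp
    qed
  qed
qed

lemma word_prod_mult_power_Suc:
  fixes a b :: "'a::ring_1"
  shows "word_prod a b w * (a * b + b) ^ Suc n =
    word_prod a b (w @ [True, False]) * (a * b + b) ^ n + word_prod a b (w @ [False]) * (a * b + b) ^ n"
  by (simp add: word_prod_append word_prod_def algebra_simps)

lemma moment_power_eq_of_words:
  fixes a b :: "'a::ring_1" and a' b' :: "'b::ring_1"
  assumes "\<And>x y. \<phi> (x + y) = \<phi> x + \<phi> y" "\<And>x y. \<phi>' (x + y) = \<phi>' x + \<phi>' y"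
    and "\<And>w. \<phi> (word_prod a b w) = \<phi>' (word_prod a' b' w)"
  shows "\<phi> ((a * b + b) ^ n) = \<phi>' ((a' * b' + b') ^ n)"
proof -
  have "\<phi> (word_prod a b w * (a * b + b) ^ n) = \<phi>' (word_prod a' b' w * (a' * b' + b') ^ n)" for w
  proof (induction n arbitrary: w)
    case 0
    then show ?case using assms(3) by simp
  next
    case (Suc n)
    show ?case by (simp only: word_prod_mult_power_Suc assms(1,2) Suc)
  qed
  from this[of "[]"] show ?thesis by simp
qed

section \<open>The conditionally monotone side\<close>

lemma mono_conditions_first:
  assumes "mono_conditions I A f g" "valid_word I A (w # ws)" "ws \<noteq> []" "fst w > fst (hd ws)"
  shows "f (wprod (w # ws)) = f (snd w) * f (wprod ws)"
proof -
  have "2 \<le> length (w # ws)" "(w # ws) ! 1 = hd ws" using assms(3) by (cases ws; simp)+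
  then show ?thesis
    using assms unfolding mono_conditions_def Let_def by (metis list.discI list.sel(3) nth_Cons_0)
qed

lemma mono_conditions_last:
  assumes "mono_conditions I A f g" "valid_word I A (ws @ [w])" "ws \<noteq> []" "fst w > fst (last ws)"
  shows "f (wprod (ws @ [w])) = f (wprod ws) * f (snd w)"
proof -
  let ?n = "length (ws @ [w])"
  have "2 \<le> ?n" "(ws @ [w]) ! (?n - 1) = w" "(ws @ [w]) ! (?n - 2) = last ws"
    using assms(3) by (simp_all add: nth_append last_conv_nth Suc_leI)
  then show ?thesis
    using assms unfolding mono_conditions_def Let_def by (metis butlast_snoc snoc_eq_iff_butlast)
qed

lemma mono_conditions_peak:
  assumes "mono_conditions I A f g" "valid_word I A (us @ w # vs)" "us \<noteq> []" "vs \<noteq> []"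
    and "fst (last us) < fst w" "fst w > fst (hd vs)"
  shows "f (wprod (us @ w # vs)) =
    (f (snd w) - g (snd w)) * f (wprod us) * f (wprod vs) + g (snd w) * f (wprod (us @ vs))"
proof -
  let ?ws = "us @ w # vs" and ?j = "length us"
  have "1 \<le> ?j" "?j + 1 < length ?ws" "?ws ! (?j - 1) = last us" "?ws ! ?j = w" "?ws ! (?j + 1) = hd vs"
    "take ?j ?ws = us" "drop (?j + 1) ?ws = vs"
    using assms(3,4) by (simp_all add: nth_append last_conv_nth hd_conv_nth Suc_leI)
  then show ?thesis
    using assms unfolding mono_conditions_def Let_def by (metis Nil_is_append_conv)
qed

lemma subalgebra_power: "subalgebra e B \<Longrightarrow> x \<in> B \<Longrightarrow> n \<ge> 1 \<Longrightarrow> x ^ n \<in> B"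
proof (induction n)
  case (Suc n)
  then show ?case by (cases "n = 0") (simp_all add: subalgebra_def)
qed simp

definition two_letter :: "'a \<Rightarrow> 'a \<Rightarrow> bool \<Rightarrow> nat \<times> 'a" where
  "two_letter a b t = (if t then (1, a) else (2, b))"

lemma wprod_map_two_letter: "wprod (map (two_letter a b) w) = word_prod a b w"
  by (induction w) (simp_all add: wprod_def word_prod_def two_letter_def)

lemma valid_word_append [simp]: "valid_word I B (u @ v) \<longleftrightarrow> valid_word I B u \<and> valid_word I B v"
  and valid_word_Cons [simp]:
    "valid_word I B (w # ws) \<longleftrightarrow> fst w \<in> I \<and> snd w \<in> B (fst w) \<and> valid_word I B ws"
  by (auto simp: valid_word_def)

lemma valid_word_map_two_letter:
  "a \<in> B 1 \<Longrightarrow> b \<in> B 2 \<Longrightarrow> valid_word {1, 2} B (map (two_letter a b) w)"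
  by (auto simp: valid_word_def two_letter_def)

lemma cmono_moment_recursion:
  fixes e :: "complex \<Rightarrow> 'a::ring_1"
  assumes "alg_prob_space e \<phi> \<psi>" and indep: "cmono_indep e \<phi> \<psi> {1::nat, 2} B"
    and "A \<in> B 1" "Y \<in> B 2"
  shows "moment_recursion (\<lambda>w. \<phi> (word_prod A Y w)) (\<lambda>p. \<phi> (A ^ p)) (\<lambda>q. \<phi> (Y ^ q)) (\<lambda>q. \<psi> (Y ^ q))"
  unfolding moment_recursion_def
proof (intro conjI allI impI)
  have phi1: "\<phi> 1 = 1" using assms(1) by (simp add: alg_prob_space_def unital_functional_def)
  have mono: "mono_conditions {1, 2} B \<phi> \<psi>" using indep by (simp add: cmono_indep_def)
  fix p q :: nat and R
  assume q: "q \<ge> 1" and R: "R = [] \<or> hd R"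
  define us where "us = map (two_letter A Y) (replicate p True)"
  define vs where "vs = map (two_letter A Y) R"
  have "subalgebra e (B 2)" using indep by (simp add: cmono_indep_def)
  then have "Y ^ q \<in> B 2" using assms(4) q by (rule subalgebra_power)
  then have valid: "valid_word {1, 2} B (us @ (2, Y ^ q) # vs)"
    using valid_word_map_two_letter[OF assms(3,4), of "replicate p True"]
      valid_word_map_two_letter[OF assms(3,4), of R] by (simp add: us_def vs_def)
  have us: "wprod us = A ^ p" "us \<noteq> [] \<Longrightarrow> last us = (1, A)"
    by (simp_all add: us_def wprod_def two_letter_def)
  have vs: "wprod vs = word_prod A Y R" "vs \<noteq> [] \<Longrightarrow> hd vs = (1, A)"
    using R by (auto simp: vs_def wprod_map_two_letter two_letter_def hd_map)
  have "\<phi> (word_prod A Y (replicate p True @ replicate q False @ R)) = \<phi> (wprod (us @ (2, Y ^ q) # vs))"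
    using us vs by (simp add: word_prod_append wprod_def mult.assoc)
  also have "\<dots> = (\<phi> (Y ^ q) - \<psi> (Y ^ q)) * \<phi> (A ^ p) * \<phi> (word_prod A Y R)
      + \<psi> (Y ^ q) * \<phi> (word_prod A Y (replicate p True @ R))"
  proof (cases "p = 0"; cases "R = []")
    assume "p = 0" "R = []"
    then show ?thesis using phi1 by (simp add: us_def vs_def wprod_def)
  next
    assume "p = 0" "R \<noteq> []"
    then have "\<phi> (wprod ((2, Y ^ q) # vs)) = \<phi> (Y ^ q) * \<phi> (wprod vs)"
      using mono_conditions_first[OF mono, of "(2, Y ^ q)" vs] valid vs by (simp add: us_def vs_def)
    then show ?thesis using \<open>p = 0\<close> phi1 vs by (simp add: us_def algebra_simps)
  next
    assume "p \<noteq> 0" "R = []"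
    then have "\<phi> (wprod (us @ [(2, Y ^ q)])) = \<phi> (wprod us) * \<phi> (Y ^ q)"
      using mono_conditions_last[OF mono, of us "(2, Y ^ q)"] valid us by (simp add: us_def vs_def)
    then show ?thesis using \<open>R = []\<close> phi1 us by (simp add: vs_def algebra_simps)
  next
    assume "p \<noteq> 0" "R \<noteq> []"
    moreover have "wprod (us @ vs) = word_prod A Y (replicate p True @ R)"
      unfolding us_def vs_def map_append[symmetric] by (rule wprod_map_two_letter)
    ultimately show ?thesis using mono_conditions_peak[OF mono valid] us vs
      by (simp add: us_def vs_def)
  qed
  finally show "\<phi> (word_prod A Y (replicate p True @ replicate q False @ R)) =
      (\<phi> (Y ^ q) - \<psi> (Y ^ q)) * \<phi> (A ^ p) * \<phi> (word_prod A Y R)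
      + \<psi> (Y ^ q) * \<phi> (word_prod A Y (replicate p True @ R))" .
qed simp

section \<open>The conditionally free side\<close>

lemma unital_functional_split_scalar:
  assumes "complex_alg e" "unital_functional e \<phi>"
  shows "\<phi> (W * y * V) = \<phi> (W * (y - e c) * V) + c * \<phi> (W * V)"
proof -
  have "W * y * V = W * (y - e c) * V + e c * (W * V)"
    using assms(1) by (simp add: algebra_simps complex_alg_mult_left_commute)
  then show ?thesis using assms(2) by (simp add: unital_functional_def)
qed

definition centered_word :: "'i set \<Rightarrow> ('i \<Rightarrow> 'a set) \<Rightarrow> ('a \<Rightarrow> complex) \<Rightarrow> ('i \<times> 'a) list \<Rightarrow> bool" where
  "centered_word I B \<psi> ws \<longleftrightarrow>
     valid_word I B ws \<and> distinct_adj (map fst ws) \<and> (\<forall>w\<in>set ws. \<psi> (snd w) = 0)"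

lemma centered_word_Nil [simp]: "centered_word I B \<psi> []"
  by (simp add: centered_word_def valid_word_def)

lemma centered_word_append:
  "centered_word I B \<psi> (u @ v) \<longleftrightarrow> centered_word I B \<psi> u \<and> centered_word I B \<psi> v
     \<and> (u = [] \<or> v = [] \<or> fst (last u) \<noteq> fst (hd v))"
  by (auto simp: centered_word_def valid_word_def distinct_adj_append_iff last_map hd_map)

lemma cfree_wprod_centered_word:
  fixes e :: "complex \<Rightarrow> 'a::ring_1"
  assumes "unital_functional e \<phi>" "cfree_indep e \<phi> \<psi> I B" "centered_word I B \<psi> ws"
  shows "\<phi> (wprod ws) = (\<Prod>w\<leftarrow>ws. \<phi> (snd w))"
proof (cases "ws = []")
  case True
  then show ?thesis using assms(1) by (simp add: unital_functional_def wprod_def)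
next
  case False
  with assms(2,3) show ?thesis
    unfolding cfree_indep_def centered_word_def distinct_adj_conv_nth by auto
qed

lemma cfree_wprod_append:
  fixes e :: "complex \<Rightarrow> 'a::ring_1"
  assumes "unital_functional e \<phi>" "cfree_indep e \<phi> \<psi> I B" "centered_word I B \<psi> (u @ v)"
  shows "\<phi> (wprod (u @ v)) = \<phi> (wprod u) * \<phi> (wprod v)"
  using assms cfree_wprod_centered_word[OF assms(1,2)] by (simp add: centered_word_append)

text \<open>A plays the role of X - 1, whose powers are psi-centered when the psi-law of X is delta_1.\<close>
locale cfree_pair =
  fixes e :: "complex \<Rightarrow> 'a::ring_1" and \<phi> \<psi> :: "'a \<Rightarrow> complex" and B :: "nat \<Rightarrow> 'a set" and A Y :: 'a
  assumes space: "alg_prob_space e \<phi> \<psi>" and indep: "cfree_indep e \<phi> \<psi> {1, 2} B"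
    and A: "A \<in> B 1" and Y: "Y \<in> B 2" and one: "1 \<in> B 2"
    and centered: "\<And>p. p \<ge> 1 \<Longrightarrow> \<psi> (A ^ p) = 0"
begin

lemma alg: "complex_alg e"
  and phi_functional: "unital_functional e \<phi>" and psi_functional: "unital_functional e \<psi>"
  using space by (simp_all add: alg_prob_space_def)

abbreviation centered_Y_power :: "nat \<Rightarrow> 'a" where
  "centered_Y_power q \<equiv> Y ^ q - e (\<psi> (Y ^ q))"

lemma centered_word_A_power: "p \<ge> 1 \<Longrightarrow> centered_word {1, 2} B \<psi> [(1, A ^ p)]"
  using indep A centered subalgebra_power
  by (auto simp: centered_word_def valid_word_def cfree_indep_def)

lemma centered_word_centered_Y_power: "centered_word {1, 2} B \<psi> [(2, centered_Y_power q)]"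
proof -
  have sub: "subalgebra e (B 2)" using indep by (simp add: cfree_indep_def)
  have "Y ^ q \<in> B 2"
    using subalgebra_power[OF sub Y] one by (cases "q = 0") auto
  moreover have "e (- \<psi> (Y ^ q)) * 1 \<in> B 2" using sub one unfolding subalgebra_def by blast
  ultimately have "Y ^ q + e (- \<psi> (Y ^ q)) * 1 \<in> B 2" using sub unfolding subalgebra_def by blast
  then have "centered_Y_power q \<in> B 2" by (simp add: complex_alg_minus[OF alg])
  moreover have "\<psi> (centered_Y_power q) = 0"
    using psi_functional by (simp add: unital_functional_diff unital_functional_scalar)
  ultimately show ?thesis by (simp add: centered_word_def valid_word_def)
qed

lemma phi_centered_Y_power: "\<phi> (centered_Y_power q) = \<phi> (Y ^ q) - \<psi> (Y ^ q)"
  using phi_functional by (simp add: unital_functional_diff unital_functional_scalar)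

definition centered_prefix :: "(nat \<times> 'a) list \<Rightarrow> bool" where
  "centered_prefix u \<longleftrightarrow> centered_word {1, 2} B \<psi> u \<and> (u = [] \<or> fst (last u) = 2)"

lemma centered_prefix_Nil: "centered_prefix []"
  by (simp add: centered_prefix_def)

lemma centered_prefix_append_A_power:
  "centered_prefix u \<Longrightarrow> p \<ge> 1 \<Longrightarrow> centered_word {1, 2} B \<psi> (u @ [(1, A ^ p)])"
  using centered_word_A_power by (auto simp: centered_prefix_def centered_word_append)

lemma centered_prefix_append_block:
  assumes "centered_prefix u" "p \<ge> 1"
  shows "centered_prefix (u @ [(1, A ^ p), (2, centered_Y_power q)])"
proof -
  have "centered_word {1, 2} B \<psi> ((u @ [(1, A ^ p)]) @ [(2, centered_Y_power q)])"
    using centered_prefix_append_A_power[OF assms] centered_word_centered_Y_power[of q]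
    unfolding centered_word_append[of _ _ _ "u @ [(1, A ^ p)]"] by simp
  then show ?thesis by (simp add: centered_prefix_def)
qed

text \<open>
  Splitting Y^q into its psi-centered part and its psi-mean turns the word into an alternating
  centered word followed by R, plus a scalar multiple of a word shorter than the original one.
\<close>
lemma phi_wprod_block_expand:
  assumes u: "centered_prefix u" and p: "p \<ge> 1"
    and factor: "\<And>v. centered_prefix v \<Longrightarrow> \<phi> (wprod v * word_prod A Y R) = \<phi> (wprod v) * \<phi> (word_prod A Y R)"
    "\<And>v. centered_prefix v \<Longrightarrow> \<phi> (wprod v * word_prod A Y (replicate p True @ R))
        = \<phi> (wprod v) * \<phi> (word_prod A Y (replicate p True @ R))"
  shows "\<phi> (wprod u * word_prod A Y (replicate p True @ replicate q False @ R))
    = \<phi> (wprod u) * (\<phi> (A ^ p) * \<phi> (centered_Y_power q) * \<phi> (word_prod A Y R)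
        + \<psi> (Y ^ q) * \<phi> (word_prod A Y (replicate p True @ R)))"
proof -
  let ?w = "u @ [(1, A ^ p), (2, centered_Y_power q)]"
  have w: "centered_prefix ?w" by (rule centered_prefix_append_block[OF u p])
  have "\<phi> (wprod u * word_prod A Y (replicate p True @ replicate q False @ R))
      = \<phi> ((wprod u * A ^ p) * Y ^ q * word_prod A Y R)"
    by (simp add: word_prod_append mult.assoc)
  also have "\<dots> = \<phi> ((wprod u * A ^ p) * centered_Y_power q * word_prod A Y R)
      + \<psi> (Y ^ q) * \<phi> ((wprod u * A ^ p) * word_prod A Y R)"
    by (rule unital_functional_split_scalar[OF alg phi_functional])
  also have "\<dots> = \<phi> (wprod ?w * word_prod A Y R)
      + \<psi> (Y ^ q) * \<phi> (wprod u * word_prod A Y (replicate p True @ R))"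
    by (simp add: wprod_def word_prod_append mult.assoc)
  also have "\<dots> = \<phi> (wprod ?w) * \<phi> (word_prod A Y R)
      + \<psi> (Y ^ q) * (\<phi> (wprod u) * \<phi> (word_prod A Y (replicate p True @ R)))"
    by (simp only: factor(1)[OF w] factor(2)[OF u])
  also have "\<phi> (wprod ?w) = \<phi> (wprod u) * (\<phi> (A ^ p) * \<phi> (centered_Y_power q))"
  proof -
    have "centered_word {1, 2} B \<psi> ?w" using w by (simp add: centered_prefix_def)
    then have AD: "centered_word {1, 2} B \<psi> [(1, A ^ p), (2, centered_Y_power q)]"
      by (simp add: centered_word_append)
    show ?thesis
      using cfree_wprod_append[OF phi_functional indep \<open>centered_word {1, 2} B \<psi> ?w\<close>]
        cfree_wprod_centered_word[OF phi_functional indep AD] by (simp add: wprod_def)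
  qed
  finally show ?thesis by (simp add: algebra_simps)
qed

lemma phi_wprod_mult_word_prod:
  assumes "centered_prefix u" "R = [] \<or> hd R"
  shows "\<phi> (wprod u * word_prod A Y R) = \<phi> (wprod u) * \<phi> (word_prod A Y R)"
  using assms
proof (induction "length R" arbitrary: R u rule: less_induct)
  case less
  obtain p q R' where R: "R = replicate p True @ replicate q False @ R'"
    and R': "R' = [] \<or> hd R'" and q0: "q = 0 \<longrightarrow> R' = []"
    using bool_list_blocks[of R] .
  consider "R = []" | "p \<ge> 1" "q = 0" | "p \<ge> 1" "q \<ge> 1"
    using less.prems(2) R q0 by (cases p; cases q) auto
  then show ?case
  proof cases
    case 1
    then show ?thesis using phi_functional by (simp add: unital_functional_def)
  next
    case 2
    then show ?thesis
      using R q0 cfree_wprod_append[OF phi_functional indep centered_prefix_append_A_power[OF less.prems(1)]]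
      by (simp add: wprod_def)
  next
    case 3
    have "length R' < length R" "length (replicate p True @ R') < length R"
      using R 3 by simp_all
    then have IH: "\<phi> (wprod v * word_prod A Y R') = \<phi> (wprod v) * \<phi> (word_prod A Y R')"
      "\<phi> (wprod v * word_prod A Y (replicate p True @ R'))
        = \<phi> (wprod v) * \<phi> (word_prod A Y (replicate p True @ R'))"
      if "centered_prefix v" for v
      using less.hyps that R' 3 by (cases p; simp)+
    show ?thesis
      using phi_wprod_block_expand[OF less.prems(1) 3(1) IH]
        phi_wprod_block_expand[OF centered_prefix_Nil 3(1) IH] phi_functional
      by (simp add: R unital_functional_def wprod_def)
  qed
qed

lemma cfree_moment_recursion:
  "moment_recursion (\<lambda>w. \<phi> (word_prod A Y w)) (\<lambda>p. \<phi> (A ^ p)) (\<lambda>q. \<phi> (Y ^ q)) (\<lambda>q. \<psi> (Y ^ q))"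
  unfolding moment_recursion_def
proof (intro conjI allI impI)
  fix p q :: nat and R
  assume R: "R = [] \<or> hd R"
  define u :: "(nat \<times> 'a) list" where "u = (if p = 0 then [] else [(1, A ^ p)]) @ [(2, centered_Y_power q)]"
  have u: "centered_prefix u"
    using centered_word_A_power[of p] centered_word_centered_Y_power[of q]
    by (auto simp: u_def centered_prefix_def centered_word_append)
  then have u_word: "centered_word {1, 2} B \<psi> u" by (simp add: centered_prefix_def)
  have "wprod u = A ^ p * centered_Y_power q" "\<phi> (wprod u) = \<phi> (A ^ p) * \<phi> (centered_Y_power q)"
    using cfree_wprod_centered_word[OF phi_functional indep u_word] phi_functional
    by (simp_all add: u_def wprod_def unital_functional_def)
  then have "\<phi> (word_prod A Y (replicate p True @ replicate q False @ R))
      = \<phi> (A ^ p) * \<phi> (centered_Y_power q) * \<phi> (word_prod A Y R)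
        + \<psi> (Y ^ q) * \<phi> (word_prod A Y (replicate p True @ R))"
    using unital_functional_split_scalar[OF alg phi_functional, of "A ^ p" "Y ^ q" "word_prod A Y R" "\<psi> (Y ^ q)"]
      phi_wprod_mult_word_prod[OF u R]
    by (simp add: word_prod_append mult.assoc)
  then show "\<phi> (word_prod A Y (replicate p True @ replicate q False @ R))
      = (\<phi> (Y ^ q) - \<psi> (Y ^ q)) * \<phi> (A ^ p) * \<phi> (word_prod A Y R)
        + \<psi> (Y ^ q) * \<phi> (word_prod A Y (replicate p True @ R))"
    by (simp add: phi_centered_Y_power algebra_simps)
qed simp

end

section \<open>Comparing the two convolutions\<close>

lemma moment_eq_of_law_eq:
  assumes "complex_alg e" "complex_alg e'" "law e \<phi> Z = law e' \<phi>' Z'"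
  shows "\<phi> (Z ^ n) = \<phi>' (Z' ^ n)"
  using law_monom_1[OF assms(1), of \<phi> Z n] law_monom_1[OF assms(2), of \<phi>' Z' n] assms(3) by simp

lemma shifted_moment_eq_of_law_eq:
  assumes "complex_alg e" "complex_alg e'" "law e \<phi> Z = law e' \<phi>' Z'"
  shows "\<phi> ((Z - 1) ^ n) = \<phi>' ((Z' - 1) ^ n)"
  using law_shifted_power[OF assms(1), of \<phi> Z n] law_shifted_power[OF assms(2), of \<phi>' Z' n] assms(3)
  by simp

lemma law_delta1_shifted_power:
  assumes "complex_alg e" "law e \<psi> X = delta1" "n \<ge> 1"
  shows "\<psi> ((X - 1) ^ n) = 0"
proof -
  have "\<psi> ((X - 1) ^ n) = delta1 ([:-1, 1:] ^ n)"
    using law_shifted_power[OF assms(1), of \<psi> X n] assms(2) by simp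
  also have "\<dots> = 0"
    using assms(3) by (simp add: delta1_def poly_power)
  finally show ?thesis .
qed

lemma cmono_word_moments:
  assumes "alg_prob_space e \<phi> \<psi>"
    and "cmono_indep e \<phi> \<psi> {1::nat, 2} (\<lambda>i. if i = 1 then ngen e (X - 1) else ngen e Y)"
  shows "moment_recursion (\<lambda>w. \<phi> (word_prod (X - 1) Y w))
    (\<lambda>p. \<phi> ((X - 1) ^ p)) (\<lambda>q. \<phi> (Y ^ q)) (\<lambda>q. \<psi> (Y ^ q))"
proof -
  have "complex_alg e" using assms(1) by (simp add: alg_prob_space_def)
  then show ?thesis
    using ngen_power[of e 1 "X - 1"] ngen_power[of e 1 Y]
    by (intro cmono_moment_recursion[OF assms]) simp_all
qed

lemma cfree_word_moments:
  assumes "alg_prob_space e \<phi> \<psi>"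
    and "cfree_indep e \<phi> \<psi> {1::nat, 2} (\<lambda>i. if i = 1 then ugen e X else ugen e Y)"
    and "law e \<psi> X = delta1"
  shows "moment_recursion (\<lambda>w. \<phi> (word_prod (X - 1) Y w))
    (\<lambda>p. \<phi> ((X - 1) ^ p)) (\<lambda>q. \<phi> (Y ^ q)) (\<lambda>q. \<psi> (Y ^ q))"
proof -
  have alg: "complex_alg e" using assms(1) by (simp add: alg_prob_space_def)
  have "cfree_pair e \<phi> \<psi> (\<lambda>i. if i = 1 then ugen e X else ugen e Y) (X - 1) Y"
    using ugen_power[OF alg, of Y 0] ugen_power[OF alg, of Y 1]
      ugen_shifted_power[OF alg, of X 1] law_delta1_shifted_power[OF alg assms(3)]
    by (intro cfree_pair.intro assms(1,2)) simp_all
  then show ?thesis by (rule cfree_pair.cfree_moment_recursion)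
qed

lemma law_mult_eq_of_word_moments:
  fixes X Y :: "'a::ring_1" and X' Y' :: "'b::ring_1"
  assumes "unital_functional e \<phi>" "unital_functional e' \<phi>'"
    and words: "\<And>w. \<phi> (word_prod (X - 1) Y w) = \<phi>' (word_prod (X' - 1) Y' w)"
  shows "law e \<phi> (X * Y) = law e' \<phi>' (X' * Y')"
proof (rule law_eqI[OF assms(1,2)])
  fix n
  have "\<phi> (x + y) = \<phi> x + \<phi> y" "\<phi>' (x' + y') = \<phi>' x' + \<phi>' y'" for x y x' y'
    using assms(1,2) unfolding unital_functional_def by blast+
  from moment_power_eq_of_words[OF this words]
  have "\<phi> (((X - 1) * Y + Y) ^ n) = \<phi>' (((X' - 1) * Y' + Y') ^ n)" .
  moreover have "(X - 1) * Y + Y = X * Y" "(X' - 1) * Y' + Y' = X' * Y'"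
    by (simp_all add: left_diff_distrib)
  ultimately show "\<phi> ((X * Y) ^ n) = \<phi>' ((X' * Y') ^ n)" by simp
qed

theorem proposition3p2:
  fixes e :: "complex \<Rightarrow> 'a::ring_1" and \<phi> \<psi> :: "'a \<Rightarrow> complex" and X Y :: 'a
    and e' :: "complex \<Rightarrow> 'b::ring_1" and \<phi>' \<psi>' :: "'b \<Rightarrow> complex" and X' Y' :: 'b
    and \<mu>1 \<mu>2 \<nu>2 :: "complex poly \<Rightarrow> complex"
  assumes "distribution \<mu>1" and "distribution \<mu>2" and "distribution \<nu>2"
    and "alg_prob_space e \<phi> \<psi>"
    and "cmono_indep e \<phi> \<psi> {1::nat, 2} (\<lambda>i. if i = 1 then ngen e (X - 1) else ngen e Y)"
    and "law e \<phi> X = \<mu>1" and "law e \<phi> Y = \<mu>2" and "law e \<psi> Y = \<nu>2"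
    and "alg_prob_space e' \<phi>' \<psi>'"
    and "cfree_indep e' \<phi>' \<psi>' {1::nat, 2} (\<lambda>i. if i = 1 then ugen e' X' else ugen e' Y')"
    and "law e' \<phi>' X' = \<mu>1" and "law e' \<psi>' X' = delta1"
    and "law e' \<phi>' Y' = \<mu>2" and "law e' \<psi>' Y' = \<nu>2"
  shows "law e \<phi> (X * Y) = law e' \<phi>' (X' * Y')"
proof -
  have alg: "complex_alg e" "complex_alg e'" and phi: "unital_functional e \<phi>" "unital_functional e' \<phi>'"
    using assms(4,9) by (simp_all add: alg_prob_space_def)
  have "moment_recursion (\<lambda>w. \<phi> (word_prod (X - 1) Y w))
      (\<lambda>p. \<phi>' ((X' - 1) ^ p)) (\<lambda>q. \<phi>' (Y' ^ q)) (\<lambda>q. \<psi>' (Y' ^ q))"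
    using cmono_word_moments[OF assms(4,5)]
      shifted_moment_eq_of_law_eq[OF alg trans[OF assms(6) assms(11)[symmetric]]]
      moment_eq_of_law_eq[OF alg trans[OF assms(7) assms(13)[symmetric]]]
      moment_eq_of_law_eq[OF alg trans[OF assms(8) assms(14)[symmetric]]]
    by simp
  from moment_recursion_unique[OF this cfree_word_moments[OF assms(9,10,12)]]
  show ?thesis
    by (intro law_mult_eq_of_word_moments[OF phi]) (rule fun_cong)
qed

end
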